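(* Let $\beta_t=b/(t+1)^{\tau_2}$ with $b>0$ and $0<\tau_2\le1$. Let $\{L_t\}$ be an i.i.d. sequence of random $N\times N$ graph Laplacians such that $L_t$ is $\mathcal{F}_{t+1}$-measurable and independent of $\mathcal{F}_t$ for all $t$, and $\lambda_2(\overline{L})=\lambda_2(\mathbb{E}[L_t])>0$. Let $\{\mathbf{z}_t\}$ be an $\mathbb{R}^{NM}$-valued $\{\mathcal{F}_t\}$-adapted process with $\mathbf{z}_t\in\mathcal{C}^\perp$ for all $t$. Then there exist a measurable $\{\mathcal{F}_{t+1}\}$-adapted $\mathbb{R}_+$-valued process $\{r_t\}$ (depending on $\{\mathbf{z}_t\}$ and $\{L_t\}$) and a constant $c_r>0$ such that $0\le r_t\le1$ almost surely, and such that for all $t$ large enough $$\|(I_{NM}-\beta_tL_t\otimes I_M)\mathbf{z}_t\|\le(1-r_t)\|\mathbf{z}_t\|$$ and $$\mathbb{E}[r_t\mid\mathcal{F}_t]\ge\frac{c_r}{(t+1)^{\tau_2}}\quad\text{a.s.}$$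
   Context: All processes are defined on a probability space with filtration $\{\mathcal{F}_t\}_{t\ge0}$. A graph Laplacian of a simple undirected graph on $\{1,\dots,N\}$ is $D-A$, where $A$ is the adjacency matrix and $D$ the diagonal degree matrix. $\lambda_2(\cdot)$ denotes the second smallest eigenvalue. The consensus subspace is $\mathcal{C}=\{\mathbf{1}_N\otimes\mathbf{a}:\mathbf{a}\in\mathbb{R}^M\}\subset\mathbb{R}^{NM}$, and $\mathcal{C}^\perp$ is its orthogonal complement. $\otimes$ is the Kronecker product and $\|\cdot\|$ the Euclidean norm. *)

theory Defs
  imports "HOL-Probability.Probability" "HOL-Computational_Algebra.Polynomial"
begin

definition is_graph_laplacian :: "real^'n^'n \<Rightarrow> bool" where
  "is_graph_laplacian L \<longleftrightarrow>
     (\<exists>A :: real^'n^'n.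
        (\<forall>i j. A $ i $ j = 0 \<or> A $ i $ j = 1) \<and>
        (\<forall>i j. A $ i $ j = A $ j $ i) \<and>
        (\<forall>i. A $ i $ i = 0) \<and>
        L = (\<chi> i j. (if i = j then (\<Sum>k\<in>UNIV. A $ i $ k) else 0) - A $ i $ j))"

definition charpoly :: "real^'n^'n \<Rightarrow> real poly" where
  "charpoly A = det (\<chi> i j. (if i = j then [:0, 1:] else 0) - [:A $ i $ j:])"

(* eigenvalues (real roots of the characteristic polynomial, with multiplicity),
   sorted increasingly; for symmetric matrices these are all eigenvalues *)
definition eigenvalues_sorted :: "real^'n^'n \<Rightarrow> real list" where
  "eigenvalues_sorted A = sorted_list_of_multiset (proots (charpoly A))"

definition lambda2 :: "real^'n^'n \<Rightarrow> real" where
  "lambda2 A = eigenvalues_sorted A ! 1"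

(* vectors in R^{NM} represented as N blocks of M-vectors: z $ i $ k = component (i,k).
   Kronecker action (L \<otimes> I_M) z *)
definition kron_apply :: "real^'n^'n \<Rightarrow> real^'m^'n \<Rightarrow> real^'m^'n" where
  "kron_apply L z = (\<chi> i. \<Sum>j\<in>UNIV. L $ i $ j *\<^sub>R z $ j)"

definition consensus :: "(real^'m^'n) set" where
  "consensus = {z. \<exists>a. \<forall>i. z $ i = a}"

definition consensus_perp :: "(real^'m^'n) set" where
  "consensus_perp = {z. \<forall>y\<in>consensus. inner z y = 0}"

end

theory Submission
  imports Defs
begin

text \<open>Let \<open>Q(z) = \<langle>z, (L \<otimes> I) z\<rangle>\<close>. For a graph Laplacian on \<open>N\<close> vertices
  \<open>\<parallel>(L \<otimes> I) z\<parallel>\<^sup>2 \<le> 2N Q(z)\<close>, so once \<open>2N\<beta>\<^sub>t \<le> 1\<close> the step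
  \<open>z \<mapsto> z - \<beta>\<^sub>t (L \<otimes> I) z\<close> contracts \<open>\<parallel>z\<parallel>\<close> by the factor \<open>1 - r\<^sub>t\<close> with
  \<open>r\<^sub>t = \<beta>\<^sub>t Q(z) / (2\<parallel>z\<parallel>\<^sup>2)\<close>. This Rayleigh quotient is linear in \<open>L\<close> with bounded
  \<open>\<F>\<^sub>t\<close>-measurable coefficients, so \<open>E[r\<^sub>t | \<F>\<^sub>t]\<close> is the same expression for the mean
  Laplacian \<open>L\<^sub>m\<close>. If \<open>\<lambda>\<^sub>2(L\<^sub>m) > 0\<close>, a nonzero kernel vector of \<open>L\<^sub>m\<close> orthogonal to \<open>1\<close>
  would make \<open>0\<close> a double root of the characteristic polynomial; hence the quadratic form of
  \<open>L\<^sub>m\<close> is positive on the nonzero sum-zero vectors and, by compactness of the unit sphere,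
  bounded below by \<open>c \<parallel>z\<parallel>\<^sup>2\<close> on \<open>\<C>\<^sup>\<bottom>\<close>. This gives \<open>E[r\<^sub>t | \<F>\<^sub>t] \<ge> c \<beta>\<^sub>t / 2\<close>.\<close>

section \<open>Characteristic polynomials and kernels\<close>

lemma det_replace_row_lincomb:
  fixes Q :: "'a::comm_ring_1^'n^'n"
  shows "det (\<chi> i. if i = s then (\<Sum>k\<in>UNIV. x k *s row k Q) else row i Q) = x s * det Q"
proof -
  have "det (\<chi> i. if i = s then (\<Sum>k\<in>UNIV. x k *s row k Q) else row i Q)
      = (\<Sum>k\<in>UNIV. x k * det (\<chi> i. if i = s then row k Q else row i Q))"
    by (subst det_linear_row_sum) (simp_all add: det_row_mul)
  also have "\<dots> = x s * det (\<chi> i. if i = s then row s Q else row i Q)"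
  proof -
    have "det (\<chi> i. if i = s then row k Q else row i Q) = 0" if "k \<noteq> s" for k
      using that by (intro det_identical_rows[of s k]) (auto simp: row_def vec_eq_iff)
    then show ?thesis by (simp add: sum.remove[of UNIV s])
  qed
  also have "(\<chi> i. if i = s then row s Q else row i Q) = Q"
    by (simp add: row_def vec_eq_iff)
  finally show ?thesis .
qed

lemma det_replace_row_if_lincomb:
  fixes Q :: "'a::comm_ring_1^'n^'n"
  assumes "(\<Sum>k\<in>UNIV. x k *s row k Q) = c *s y"
  shows "x s * det Q = c * det (\<chi> i. if i = s then y else row i Q)"
  using det_replace_row_lincomb[of s x Q] assms det_row_mul[of s c "\<lambda>_. y" "\<lambda>i. row i Q"]
  by metis

definition charmat :: "real^'n^'n \<Rightarrow> real poly^'n^'n" where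
  "charmat A = (\<chi> i j. (if i = j then [:0, 1:] else 0) - [:A $ i $ j:])"

lemma charpoly_eq_det_charmat: "charpoly A = det (charmat A)"
  by (simp add: charpoly_def charmat_def)

lemma charmat_rows_lincomb_kernel:
  fixes A :: "real^'n^'n"
  assumes sym: "\<And>i j. A $ i $ j = A $ j $ i" and ker: "A *v x = 0"
  shows "(\<Sum>k\<in>UNIV. [:x $ k:] *s row k (charmat A)) = [:0, 1:] *s (\<chi> j. [:x $ j:])"
proof (unfold vec_eq_iff, intro allI)
  fix j
  have "(\<Sum>k\<in>UNIV. [:x $ k * A $ k $ j:]) = [:(A *v x) $ j:]"
    by (simp add: matrix_vector_mult_def sym mult.commute flip: smult_sum[of _ _ 1, simplified smult_one])
  then have "(\<Sum>k\<in>UNIV. [:x $ k * A $ k $ j:]) = 0"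
    using ker by simp
  then show "(\<Sum>k\<in>UNIV. [:x $ k:] *s row k (charmat A)) $ j = ([:0, 1:] *s (\<chi> j. [:x $ j:])) $ j"
    by (simp add: sum_component row_def charmat_def right_diff_distrib sum_subtractf mult.commute
        if_distrib[of "smult _"] cong: if_cong)
qed

text \<open>Replacing row \<open>p\<close> of \<open>X I - A\<close> by the kernel vector \<open>1\<close> and then row \<open>s\<close> by a second kernel
  vector \<open>w\<close> with \<open>w $ p = 0\<close> extracts a factor \<open>X\<close> each time; \<open>w $ p = 0\<close> makes the second
  row combination blind to the already replaced row.\<close>

lemma X_sq_dvd_charpoly_if_kernel_sum_zero:
  fixes A :: "real^'n^'n" and v :: "real^'n"
  assumes sym: "\<And>i j. A $ i $ j = A $ j $ i" and one: "A *v 1 = 0"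
    and kv: "A *v v = 0" and sv: "(\<Sum>i\<in>UNIV. v $ i) = 0" and vnz: "v \<noteq> 0"
  shows "[:0, 1:]^2 dvd charpoly A"
proof -
  obtain p where vp: "v $ p \<noteq> 0" using vnz by (metis vec_eq_iff zero_index)
  define w where "w = v - (v $ p) *\<^sub>R 1"
  have wp: "w $ p = 0" by (simp add: w_def)
  have kw: "A *v w = 0"
    using kv one by (simp add: w_def matrix_vector_mult_diff_distrib matrix_vector_mult_scaleR)
  have "w \<noteq> 0"
  proof
    assume "w = 0"
    then have vconst: "v $ i = v $ p" for i by (simp add: w_def vec_eq_iff)
    have "(\<Sum>i\<in>UNIV. v $ i) = (\<Sum>i\<in>(UNIV::'n set). v $ p)"
      by (rule sum.cong[OF refl vconst])
    then show False using sv vp by simp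
  qed
  then obtain s where ws: "w $ s \<noteq> 0" by (metis vec_eq_iff zero_index)
  define Q where "Q = (\<chi> i. if i = p then (\<chi> j. [:(1::real^'n) $ j:]) else row i (charmat A))"
  have "[:1:] * det (charmat A) = [:0, 1:] * det Q"
    unfolding Q_def
    using det_replace_row_if_lincomb[OF charmat_rows_lincomb_kernel[OF sym one], of p] by simp
  moreover have "(\<Sum>k\<in>UNIV. [:w $ k:] *s row k Q) = [:0, 1:] *s (\<chi> j. [:w $ j:])"
  proof -
    have "(\<Sum>k\<in>UNIV. [:w $ k:] *s row k Q) = (\<Sum>k\<in>UNIV. [:w $ k:] *s row k (charmat A))"
      by (rule sum.cong) (auto simp: Q_def row_def wp vec_eq_iff)
    then show ?thesis using charmat_rows_lincomb_kernel[OF sym kw] by simp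
  qed
  then have "[:w $ s:] * det Q = [:0, 1:] * det (\<chi> i. if i = s then (\<chi> j. [:w $ j:]) else row i Q)"
    by (rule det_replace_row_if_lincomb)
  ultimately have "smult (w $ s) (charpoly A)
      = [:0, 1:]^2 * det (\<chi> i. if i = s then (\<chi> j. [:w $ j:]) else row i Q)"
    by (simp add: charpoly_eq_det_charmat power2_eq_square mult.left_commute)
  then have "[:0, 1:]^2 dvd smult (w $ s) (charpoly A)" by simp
  then show ?thesis using ws dvd_smult_cancel by blast
qed

lemma sorted_nth_1_le_if_count_ge_2:
  fixes xs :: "'a::linorder list"
  assumes "sorted xs" "count (mset xs) a \<ge> 2"
  shows "xs ! 1 \<le> a"
proof (rule ccontr)
  assume gt: "\<not> xs ! 1 \<le> a"
  obtain x y zs where xs: "xs = x # y # zs"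
    using assms(2) by (cases xs; cases "tl xs") (auto split: if_splits)
  have "a \<notin> set (y # zs)" using assms(1) gt by (auto simp: xs)
  then have "count (mset (y # zs)) a = 0" by (auto simp: count_eq_zero_iff)
  then have "count (mset xs) a \<le> 1" by (simp add: xs)
  then show False using assms(2) by simp
qed

lemma poly_det: "poly (det Q) x = det (\<chi> i j. poly (Q $ i $ j) x)"
  by (simp add: det_def poly_sum poly_prod)

lemma charpoly_nonzero_if_psd:
  fixes A :: "real^'n^'n"
  assumes psd: "\<And>x. inner x (A *v x) \<ge> 0"
  shows "charpoly A \<noteq> 0"
proof
  let ?B = "(\<chi> i j. (if i = j then -1 else 0) - A $ i $ j) :: real^'n^'n"
  assume "charpoly A = 0"
  then have "det ?B = 0"
    using poly_det[of "charmat A" "-1"]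
    by (simp add: charpoly_eq_det_charmat charmat_def if_distrib[of "\<lambda>q. poly q _"] cong: if_cong)
  then obtain x where x: "?B *v x = 0" "x \<noteq> 0"
    using invertible_det_nz matrix_left_invertible_ker invertible_left_inverse by blast
  have "?B *v x = - x - A *v x"
    by (simp add: vec_eq_iff matrix_vector_mult_def left_diff_distrib sum_subtractf
        if_distrib[of "\<lambda>c. c * _"] cong: if_cong)
  then have "inner x (A *v x) = - inner x x" using x(1) by (simp add: algebra_simps)
  then show False using psd[of x] x(2) inner_gt_zero_iff[of x] by linarith
qed

section \<open>Laplacian matrices\<close>

definition laplacian_matrix :: "real^'n^'n \<Rightarrow> bool" where
  "laplacian_matrix A \<longleftrightarrow>
     (\<forall>i j. A $ i $ j = A $ j $ i) \<and> (\<forall>i. (\<Sum>j\<in>UNIV. A $ i $ j) = 0) \<and>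
     (\<forall>i j. i \<noteq> j \<longrightarrow> A $ i $ j \<le> 0)"

lemma laplacian_quadratic_form:
  fixes A :: "real^'n^'n" and z :: "'n \<Rightarrow> 'v::real_inner"
  assumes sym: "\<And>i j. A $ i $ j = A $ j $ i" and rs: "\<And>i. (\<Sum>j\<in>UNIV. A $ i $ j) = 0"
  shows "(\<Sum>i\<in>UNIV. inner (z i) (\<Sum>j\<in>UNIV. A $ i $ j *\<^sub>R z j))
       = (\<Sum>i\<in>UNIV. \<Sum>j\<in>UNIV. - A $ i $ j * (norm (z i - z j))\<^sup>2) / 2"
proof -
  define S where "S = (\<Sum>i\<in>UNIV. \<Sum>j\<in>UNIV. A $ i $ j * inner (z i) (z j - z i))"
  have "(\<Sum>j\<in>UNIV. A $ i $ j *\<^sub>R z j) = (\<Sum>j\<in>UNIV. A $ i $ j *\<^sub>R (z j - z i))" for i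
    using rs[of i] by (simp add: scaleR_diff_right sum_subtractf flip: scaleR_sum_left)
  then have form: "(\<Sum>i\<in>UNIV. inner (z i) (\<Sum>j\<in>UNIV. A $ i $ j *\<^sub>R z j)) = S"
    by (simp add: S_def inner_sum_right)
  have "S = (\<Sum>i\<in>UNIV. \<Sum>j\<in>UNIV. A $ i $ j * inner (z j) (z i - z j))"
    unfolding S_def by (subst sum.swap) (simp add: sym)
  then have "2 * S = (\<Sum>i\<in>UNIV. \<Sum>j\<in>UNIV. A $ i $ j * (inner (z i) (z j - z i) + inner (z j) (z i - z j)))"
    by (simp add: S_def distrib_left sum.distrib)
  also have "\<dots> = (\<Sum>i\<in>UNIV. \<Sum>j\<in>UNIV. - A $ i $ j * (norm (z i - z j))\<^sup>2)"
    by (simp add: power2_norm_eq_inner inner_diff_left inner_diff_right inner_commute algebra_simps)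
  finally show ?thesis using form by simp
qed

lemma inner_kron_apply:
  "inner z (kron_apply A z) = (\<Sum>i\<in>UNIV. inner (z $ i) (\<Sum>j\<in>UNIV. A $ i $ j *\<^sub>R z $ j))"
  by (simp add: inner_vec_def kron_apply_def)

lemma inner_matrix_vector_mult:
  "inner (x::real^'n) (A *v x) = (\<Sum>i\<in>UNIV. inner (x $ i) (\<Sum>j\<in>UNIV. A $ i $ j *\<^sub>R x $ j))"
  by (simp add: inner_vec_def matrix_vector_mult_def)

lemma laplacian_edge_terms_nonneg:
  fixes A :: "real^'n^'n" and z :: "'n \<Rightarrow> 'v::real_normed_vector"
  assumes "laplacian_matrix A"
  shows "0 \<le> - A $ i $ j * (norm (z i - z j))\<^sup>2"
  using assms by (cases "i = j") (auto simp: laplacian_matrix_def mult_nonpos_nonneg)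

lemma laplacian_form_nonneg:
  fixes A :: "real^'n^'n" and z :: "'n \<Rightarrow> 'v::real_inner"
  assumes "laplacian_matrix A"
  shows "0 \<le> (\<Sum>i\<in>UNIV. inner (z i) (\<Sum>j\<in>UNIV. A $ i $ j *\<^sub>R z j))"
  using assms laplacian_edge_terms_nonneg[OF assms, of _ _ z]
  by (simp add: laplacian_quadratic_form laplacian_matrix_def sum_nonneg)

lemma laplacian_matrix_psd:
  fixes A :: "real^'n^'n"
  assumes "laplacian_matrix A"
  shows "0 \<le> inner x (A *v x)"
  unfolding inner_matrix_vector_mult by (rule laplacian_form_nonneg[OF assms])

lemma laplacian_matrix_one_in_kernel:
  assumes "laplacian_matrix A"
  shows "A *v 1 = 0"
  using assms by (simp add: laplacian_matrix_def vec_eq_iff matrix_vector_mult_def)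

lemma laplacian_kernel_sum_zero_eq_0:
  fixes A :: "real^'n^'n"
  assumes lap: "laplacian_matrix A" and l2: "lambda2 A > 0"
    and kv: "A *v v = 0" and sv: "(\<Sum>i\<in>UNIV. v $ i) = 0"
  shows "v = 0"
proof (rule ccontr)
  assume "v \<noteq> 0"
  have sym: "A $ i $ j = A $ j $ i" for i j using lap by (simp add: laplacian_matrix_def)
  have nz: "charpoly A \<noteq> 0" by (rule charpoly_nonzero_if_psd[OF laplacian_matrix_psd[OF lap]])
  have "[:0, 1:]^2 dvd charpoly A"
    by (rule X_sq_dvd_charpoly_if_kernel_sum_zero[OF sym laplacian_matrix_one_in_kernel[OF lap] kv sv
          \<open>v \<noteq> 0\<close>])
  then have "2 \<le> count (proots (charpoly A)) 0"
    using order_divides[of 0 2 "charpoly A"] nz by simp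
  then have "eigenvalues_sorted A ! 1 \<le> 0"
    by (intro sorted_nth_1_le_if_count_ge_2) (simp_all add: eigenvalues_sorted_def)
  then show False using l2 by (simp add: lambda2_def)
qed

lemma laplacian_form_pos:
  fixes A :: "real^'n^'n" and z :: "real^'m^'n"
  assumes lap: "laplacian_matrix A" and l2: "lambda2 A > 0"
    and zs: "(\<Sum>i\<in>UNIV. z $ i) = 0" and znz: "z \<noteq> 0"
  shows "inner z (kron_apply A z) > 0"
proof (rule ccontr)
  let ?e = "\<lambda>i j. - A $ i $ j * (norm (z $ i - z $ j))\<^sup>2"
  have sym: "\<And>i j. A $ i $ j = A $ j $ i" and rs: "\<And>i. (\<Sum>j\<in>UNIV. A $ i $ j) = 0"
    using lap by (auto simp: laplacian_matrix_def)
  have e_nonneg: "0 \<le> ?e i j" for i j by (rule laplacian_edge_terms_nonneg[OF lap])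
  assume "\<not> inner z (kron_apply A z) > 0"
  then have "(\<Sum>i\<in>UNIV. \<Sum>j\<in>UNIV. ?e i j) = 0"
    using laplacian_form_nonneg[OF lap, of "($) z"]
    by (simp add: inner_kron_apply laplacian_quadratic_form[OF sym rs])
  then have "?e i j = 0" for i j
    using e_nonneg by (simp add: sum_nonneg_eq_0_iff sum_nonneg)
  then have edge: "A $ i $ j = 0 \<or> z $ i = z $ j" for i j by auto
  have "(\<chi> i. z $ i $ k) = 0" for k
  proof (rule laplacian_kernel_sum_zero_eq_0[OF lap l2])
    have "(\<Sum>j\<in>UNIV. A $ i $ j * z $ j $ k) = (\<Sum>j\<in>UNIV. A $ i $ j) * z $ i $ k" for i
      unfolding sum_distrib_right by (rule sum.cong) (metis edge mult_zero_left)+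
    then show "A *v (\<chi> i. z $ i $ k) = 0"
      by (simp add: rs vec_eq_iff matrix_vector_mult_def)
    show "(\<Sum>i\<in>UNIV. (\<chi> i. z $ i $ k) $ i) = 0"
      using zs by (simp add: vec_eq_iff flip: sum_component)
  qed
  then show False using znz by (simp add: vec_eq_iff)
qed

definition rayleigh :: "real^'n^'n \<Rightarrow> real^'m^'n \<Rightarrow> real" where
  "rayleigh A z = inner z (kron_apply A z) / (norm z)\<^sup>2"

lemma rayleigh_0 [simp]: "rayleigh A 0 = 0"
  by (simp add: rayleigh_def)

lemma kron_apply_scaleR: "kron_apply A (c *\<^sub>R z) = c *\<^sub>R kron_apply A z"
  by (simp add: kron_apply_def vec_eq_iff scaleR_sum_right sum_distrib_left mult_ac)

lemma rayleigh_scaleR: "c \<noteq> 0 \<Longrightarrow> rayleigh A (c *\<^sub>R z) = rayleigh A z"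
  by (simp add: rayleigh_def kron_apply_scaleR power_mult_distrib power2_eq_square[symmetric] mult.assoc[symmetric])

lemma laplacian_form_coercive:
  fixes A :: "real^'n^'n"
  assumes lap: "laplacian_matrix A" and l2: "lambda2 A > 0"
  obtains c where "c > 0"
    "\<And>z::real^'m^'n. (\<Sum>i\<in>UNIV. z $ i) = 0 \<Longrightarrow> c * (norm z)\<^sup>2 \<le> inner z (kron_apply A z)"
proof -
  define S where "S = {z::real^'m^'n. (\<Sum>i\<in>UNIV. z $ i) = 0 \<and> norm z = 1}"
  obtain c where c: "c > 0" "\<And>u. u \<in> S \<Longrightarrow> c \<le> rayleigh A u"
  proof (cases "S = {}")
    case False
    have "S = {z. (\<Sum>i\<in>UNIV. z $ i) = 0} \<inter> sphere 0 1"
      by (auto simp: S_def)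
    moreover have "closed {z::real^'m^'n. (\<Sum>i\<in>UNIV. z $ i) = 0}"
      by (intro closed_Collect_eq continuous_intros)
    ultimately have "compact S" by (simp add: closed_Int_compact)
    moreover have "continuous_on S (rayleigh A)"
      unfolding rayleigh_def inner_kron_apply S_def by (intro continuous_intros) auto
    ultimately obtain u0 where "u0 \<in> S" "\<And>u. u \<in> S \<Longrightarrow> rayleigh A u0 \<le> rayleigh A u"
      using continuous_attains_inf[of S "rayleigh A"] False by blast
    moreover have "rayleigh A u0 > 0"
      using \<open>u0 \<in> S\<close> laplacian_form_pos[OF lap l2, of u0] by (auto simp: S_def rayleigh_def) (metis norm_zero zero_neq_one)
    ultimately show thesis using that by blast
  qed (use that[of 1] in auto)
  have "c * (norm z)\<^sup>2 \<le> inner z (kron_apply A z)" if zs: "(\<Sum>i\<in>UNIV. z $ i) = 0" for z :: "real^'m^'n"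
  proof (cases "z = 0")
    case False
    have "(1 / norm z) *\<^sub>R z \<in> S"
      using zs False by (simp add: S_def flip: scaleR_sum_right)
    then have "c \<le> rayleigh A ((1 / norm z) *\<^sub>R z)" by (rule c(2))
    also have "\<dots> = rayleigh A z" using False by (simp add: rayleigh_scaleR)
    finally have "c \<le> rayleigh A z" .
    then show ?thesis using False by (simp add: rayleigh_def le_divide_eq)
  qed (simp add: kron_apply_def)
  then show thesis using that c(1) by blast
qed

section \<open>Graph Laplacians and the consensus step\<close>

lemma graph_laplacian_laplacian_matrix:
  fixes L :: "real^'n^'n"
  assumes "is_graph_laplacian L"
  shows "laplacian_matrix L"
proof -
  obtain A :: "real^'n^'n" where A: "\<forall>i j. A $ i $ j = 0 \<or> A $ i $ j = 1" "\<forall>i j. A $ i $ j = A $ j $ i"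
    and L: "L = (\<chi> i j. (if i = j then (\<Sum>k\<in>UNIV. A $ i $ k) else 0) - A $ i $ j)"
    using assms unfolding is_graph_laplacian_def by blast
  have "L $ i $ j = (if i = j then (\<Sum>k\<in>UNIV. A $ i $ k) else 0) - A $ i $ j" for i j
    by (simp add: L)
  then have "(\<Sum>j\<in>UNIV. L $ i $ j) = 0" for i
    by (simp only: sum_subtractf) simp
  moreover have "L $ i $ j \<le> 0" if "i \<noteq> j" for i j
    using that A(1)[rule_format, of i j] by (auto simp: L)
  ultimately show ?thesis using A(2) by (simp add: laplacian_matrix_def L)
qed

lemma graph_laplacian_offdiag:
  assumes "is_graph_laplacian L" "i \<noteq> j"
  shows "L $ i $ j = 0 \<or> L $ i $ j = -1"
  using assms unfolding is_graph_laplacian_def by force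

lemma graph_laplacian_entry_bound:
  fixes L :: "real^'n^'n"
  assumes "is_graph_laplacian L"
  shows "\<bar>L $ i $ j\<bar> \<le> CARD('n)"
proof (cases "i = j")
  case True
  obtain A :: "real^'n^'n" where A: "\<forall>i j. A $ i $ j = 0 \<or> A $ i $ j = 1" "\<forall>i. A $ i $ i = 0"
    and L: "L = (\<chi> i j. (if i = j then (\<Sum>k\<in>UNIV. A $ i $ k) else 0) - A $ i $ j)"
    using assms unfolding is_graph_laplacian_def by blast
  have "0 \<le> A $ i $ k \<and> A $ i $ k \<le> 1" for k
    using A(1) by (metis order_refl zero_le_one)
  then have "0 \<le> (\<Sum>k\<in>UNIV. A $ i $ k)" "(\<Sum>k\<in>UNIV. A $ i $ k) \<le> (\<Sum>k\<in>(UNIV::'n set). 1)"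
    by (intro sum_nonneg sum_mono; simp)+
  then show ?thesis using True A(2) by (simp add: L)
next
  case False
  then show ?thesis using graph_laplacian_offdiag[OF assms False] by auto
qed

text \<open>Row \<open>i\<close> of \<open>(L \<otimes> I) z\<close> is the sum of \<open>z\<^sub>i - z\<^sub>j\<close> over the neighbours \<open>j\<close> of \<open>i\<close>;
  Cauchy--Schwarz over the at most \<open>N\<close> neighbours, then summing over \<open>i\<close>, counts every edge twice.\<close>

lemma graph_laplacian_kron_norm_sq_le:
  fixes L :: "real^'n^'n" and z :: "real^'m^'n"
  assumes lap: "is_graph_laplacian L"
  shows "(norm (kron_apply L z))\<^sup>2 \<le> 2 * real CARD('n) * inner z (kron_apply L z)"
proof -
  have lm: "laplacian_matrix L" by (rule graph_laplacian_laplacian_matrix[OF lap])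
  then have sym: "\<And>i j. L $ i $ j = L $ j $ i" and rs: "\<And>i. (\<Sum>j\<in>UNIV. L $ i $ j) = 0"
    by (auto simp: laplacian_matrix_def)
  define w where "w i j = (if i = j then 0 else - L $ i $ j)" for i j
  define d where "d i j = norm (z $ i - z $ j)" for i j
  have w01: "w i j = 0 \<or> w i j = 1" for i j
    using graph_laplacian_offdiag[OF lap, of i j] by (auto simp: w_def)
  have row: "kron_apply L z $ i = (\<Sum>j\<in>UNIV. w i j *\<^sub>R (z $ i - z $ j))" for i
  proof -
    have "(\<Sum>j\<in>UNIV. w i j *\<^sub>R (z $ i - z $ j)) = (\<Sum>j\<in>UNIV. L $ i $ j *\<^sub>R (z $ j - z $ i))"
      by (rule sum.cong) (auto simp: w_def scaleR_diff_right)
    also have "\<dots> = kron_apply L z $ i"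
      using rs[of i] by (simp add: kron_apply_def scaleR_diff_right sum_subtractf flip: scaleR_sum_left)
    finally show ?thesis by simp
  qed
  have "(norm (kron_apply L z $ i))\<^sup>2 \<le> CARD('n) * (\<Sum>j\<in>UNIV. - L $ i $ j * (d i j)\<^sup>2)" for i
  proof -
    have "norm (kron_apply L z $ i) \<le> (\<Sum>j\<in>UNIV. w i j * d i j)"
      unfolding row d_def using w01[of i]
      by (intro order_trans[OF norm_sum] sum_mono) (metis norm_scaleR abs_0 abs_1 order_refl)
    then have "(norm (kron_apply L z $ i))\<^sup>2 \<le> (\<Sum>j\<in>UNIV. w i j * d i j)\<^sup>2"
      by (intro power_mono) auto
    also have "\<dots> \<le> (\<Sum>j\<in>UNIV. (w i j * d i j)\<^sup>2) * CARD('n)"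
      by (rule sum_squared_le_sum_of_squares)
    also have "(\<Sum>j\<in>UNIV. (w i j * d i j)\<^sup>2) = (\<Sum>j\<in>UNIV. - L $ i $ j * (d i j)\<^sup>2)"
      by (intro sum.cong) (auto simp: w_def d_def power_mult_distrib dest: graph_laplacian_offdiag[OF lap])
    finally show ?thesis by (simp add: mult.commute)
  qed
  then have "(\<Sum>i\<in>UNIV. (norm (kron_apply L z $ i))\<^sup>2)
      \<le> (\<Sum>i\<in>UNIV. CARD('n) * (\<Sum>j\<in>UNIV. - L $ i $ j * (d i j)\<^sup>2))"
    by (rule sum_mono)
  then have "(norm (kron_apply L z))\<^sup>2 \<le> (\<Sum>i\<in>UNIV. CARD('n) * (\<Sum>j\<in>UNIV. - L $ i $ j * (d i j)\<^sup>2))"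
    by (simp add: power2_norm_eq_inner inner_vec_def)
  also have "\<dots> = 2 * real CARD('n) * inner z (kron_apply L z)"
    by (simp add: inner_kron_apply laplacian_quadratic_form[OF sym rs] d_def flip: sum_distrib_left)
  finally show ?thesis .
qed

text \<open>Since \<open>1 - 2q \<le> (1 - q)\<^sup>2\<close>, a decrease of the squared norm by \<open>2q \<parallel>z\<parallel>\<^sup>2\<close> contracts the
  norm by the factor \<open>1 - q\<close>.\<close>

lemma graph_laplacian_step_contraction:
  fixes L :: "real^'n^'n" and z :: "real^'m^'n" and \<beta> :: real
  assumes lap: "is_graph_laplacian L" and \<beta>: "0 \<le> \<beta>" "2 * real CARD('n) * \<beta> \<le> 1"
  defines "q \<equiv> \<beta> / 2 * rayleigh L z"
  shows "norm (z - \<beta> *\<^sub>R kron_apply L z) \<le> (1 - q) * norm z" "0 \<le> q" "q \<le> 1/2"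
proof -
  define Q where "Q = inner z (kron_apply L z)"
  have Q: "0 \<le> Q"
    unfolding Q_def inner_kron_apply
    by (rule laplacian_form_nonneg[OF graph_laplacian_laplacian_matrix[OF lap]])
  have "(norm (z - \<beta> *\<^sub>R kron_apply L z))\<^sup>2
      = (norm z)\<^sup>2 - 2 * \<beta> * Q + \<beta>\<^sup>2 * (norm (kron_apply L z))\<^sup>2"
    using dot_norm_neg[of z "\<beta> *\<^sub>R kron_apply L z"] by (simp add: Q_def power_mult_distrib)
  also have "\<dots> \<le> (norm z)\<^sup>2 - 2 * \<beta> * Q + \<beta>\<^sup>2 * (2 * real CARD('n) * Q)"
    using graph_laplacian_kron_norm_sq_le[OF lap, of z] by (simp add: Q_def mult_left_mono)
  also have "\<dots> = (norm z)\<^sup>2 - \<beta> * Q - (1 - 2 * real CARD('n) * \<beta>) * (\<beta> * Q)"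
    by (simp add: power2_eq_square algebra_simps)
  also have "\<dots> \<le> (norm z)\<^sup>2 - \<beta> * Q"
    using \<beta> Q by simp
  finally have step: "(norm (z - \<beta> *\<^sub>R kron_apply L z))\<^sup>2 \<le> (norm z)\<^sup>2 - \<beta> * Q" .
  have q: "2 * q * (norm z)\<^sup>2 = \<beta> * Q"
    by (cases "z = 0") (simp_all add: q_def rayleigh_def Q_def)
  show "0 \<le> q" using \<beta>(1) Q by (simp add: q_def rayleigh_def Q_def)
  show "q \<le> 1/2"
  proof (cases "z = 0")
    case False
    have "0 \<le> (norm z)\<^sup>2 - \<beta> * Q" using step by (meson order_trans zero_le_power2)
    then have "0 \<le> (norm z)\<^sup>2 * (1 - 2 * q)" using q by (simp add: algebra_simps)
    then show ?thesis using False by (simp add: zero_le_mult_iff)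
  qed (simp add: q_def)
  have "((1 - q) * norm z)\<^sup>2 = (norm z)\<^sup>2 - 2 * q * (norm z)\<^sup>2 + (q * norm z)\<^sup>2"
    by (simp add: power2_eq_square algebra_simps)
  then have "(norm (z - \<beta> *\<^sub>R kron_apply L z))\<^sup>2 \<le> ((1 - q) * norm z)\<^sup>2"
    using step q zero_le_power2[of "q * norm z"] by linarith
  then show "norm (z - \<beta> *\<^sub>R kron_apply L z) \<le> (1 - q) * norm z"
    by (rule power2_le_imp_le) (use \<open>q \<le> 1/2\<close> in simp)
qed

text \<open>At \<open>z = 0\<close> the contraction holds for any rate; the value \<open>\<beta> c / 2\<close> there keeps the lower bound
  on the conditional expectation valid.\<close>

definition consensus_rate :: "real \<Rightarrow> real \<Rightarrow> real^'n^'n \<Rightarrow> real^'m^'n \<Rightarrow> real" where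
  "consensus_rate \<beta> c A z = \<beta> / 2 * ((if z = 0 then c else 0) + rayleigh A z)"

lemma consensus_rate_contraction:
  fixes L :: "real^'n^'n" and z :: "real^'m^'n"
  assumes lap: "is_graph_laplacian L" and \<beta>: "0 \<le> \<beta>" "2 * real CARD('n) * \<beta> \<le> 1"
    and c: "0 \<le> c" "c \<le> 1"
  shows "norm (z - \<beta> *\<^sub>R kron_apply L z) \<le> (1 - consensus_rate \<beta> c L z) * norm z"
    and "0 \<le> consensus_rate \<beta> c L z" "consensus_rate \<beta> c L z \<le> 1"
proof -
  note step = graph_laplacian_step_contraction[OF lap \<beta>, of z]
  show "norm (z - \<beta> *\<^sub>R kron_apply L z) \<le> (1 - consensus_rate \<beta> c L z) * norm z"
    using step(1) by (cases "z = 0") (simp_all add: consensus_rate_def kron_apply_def)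
  show "0 \<le> consensus_rate \<beta> c L z"
    using step(2) \<beta>(1) c(1) by (simp add: consensus_rate_def)
  have "0 < CARD('n)" by simp
  then have "\<beta> \<le> 1"
    using \<beta> mult_right_mono[of 1 "2 * real CARD('n)" \<beta>] by linarith
  then show "consensus_rate \<beta> c L z \<le> 1"
    using step(3) \<beta>(1) c mult_mono[of \<beta> 1 c 1] by (simp add: consensus_rate_def)
qed

lemma consensus_rate_ge:
  assumes "c * (norm z)\<^sup>2 \<le> inner z (kron_apply A z)" "0 \<le> \<beta>"
  shows "\<beta> * c / 2 \<le> consensus_rate \<beta> c A z"
proof (cases "z = 0")
  case False
  then have "c \<le> rayleigh A z" using assms(1) by (simp add: rayleigh_def le_divide_eq)
  then show ?thesis using False assms(2) by (simp add: consensus_rate_def mult_left_mono)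
qed (simp add: consensus_rate_def rayleigh_def)

lemma rayleigh_eq_sum:
  fixes A :: "real^'n^'n" and z :: "real^'m^'n"
  shows "rayleigh A z = (\<Sum>p\<in>UNIV. inner (z $ fst p) (z $ snd p) / (norm z)\<^sup>2 * A $ fst p $ snd p)"
proof -
  have "inner z (kron_apply A z) = (\<Sum>i\<in>UNIV. \<Sum>j\<in>UNIV. inner (z $ i) (z $ j) * A $ i $ j)"
    by (simp add: inner_kron_apply inner_sum_right mult.commute)
  also have "\<dots> = (\<Sum>p\<in>UNIV. inner (z $ fst p) (z $ snd p) * A $ fst p $ snd p)"
    by (simp add: sum.cartesian_product' flip: UNIV_Times_UNIV)
  finally show ?thesis
    by (simp add: rayleigh_def sum_divide_distrib)
qed

lemma inner_components_div_norm_bound: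
  fixes z :: "real^'m^'n"
  shows "\<bar>inner (z $ i) (z $ j) / (norm z)\<^sup>2\<bar> \<le> 1"
proof (cases "z = 0")
  case False
  have "\<bar>inner (z $ i) (z $ j)\<bar> \<le> norm (z $ i) * norm (z $ j)" by (rule Cauchy_Schwarz_ineq2)
  also have "\<dots> \<le> norm z * norm z" by (intro mult_mono Finite_Cartesian_Product.norm_nth_le) auto
  finally show ?thesis using False by (simp add: abs_div power2_eq_square divide_le_eq)
qed simp

section \<open>Conditional expectations under independence\<close>

lemma borel_measurable_vec_nth [measurable]:
  "(\<lambda>x::'a::real_normed_vector^'n. x $ i) \<in> borel_measurable borel"
  by (intro borel_measurable_continuous_onI continuous_intros)

lemma borel_measurable_kron_apply [measurable]:
  assumes "f \<in> borel_measurable M" "g \<in> borel_measurable M"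
  shows "(\<lambda>\<omega>. kron_apply (f \<omega>) (g \<omega>)) \<in> borel_measurable M"
  using assms by (rule borel_measurable_continuous_Pair)
    (unfold kron_apply_def, intro continuous_on_vec_lambda continuous_intros)

lemma borel_measurable_consensus_rate [measurable]:
  assumes "f \<in> borel_measurable M" "g \<in> borel_measurable M"
  shows "(\<lambda>\<omega>. consensus_rate \<beta> c (f \<omega>) (g \<omega>)) \<in> borel_measurable M"
  using assms unfolding consensus_rate_def rayleigh_def by measurable

lemma (in prob_space) indep_set_mono:
  assumes "indep_set A B" "A' \<subseteq> A" "B' \<subseteq> B"
  shows "indep_set A' B'"
  using assms unfolding indep_sets2_eq by blast

lemma sigma_sets_vimage_subset:
  assumes "f \<in> measurable M N"
  shows "sigma_sets (space M) {f -` B \<inter> space M |B. B \<in> sets N} \<subseteq> sets M"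
  using assms by (intro sets.sigma_sets_subset) (auto simp: measurable_sets)

lemma real_cond_exp_indep:
  fixes X :: "'a \<Rightarrow> 'b::topological_space" and g :: "'b \<Rightarrow> real"
  assumes "prob_space M" and sub: "subalgebra M F"
    and ind: "prob_space.indep_set M (sets F) (sets (vimage_algebra (space M) X borel))"
    and X: "X \<in> borel_measurable M" and g: "g \<in> borel_measurable borel"
    and int: "integrable M (\<lambda>\<omega>. g (X \<omega>))"
  shows "AE \<omega> in M. real_cond_exp M F (\<lambda>\<omega>. g (X \<omega>)) \<omega> = integral\<^sup>L M (\<lambda>\<omega>. g (X \<omega>))"
proof -
  interpret prob_space M by fact
  interpret finite_measure_subalgebra M F by unfold_locales (rule sub)
  have space_F: "space F = space M" using sub by (simp add: subalgebra_def)
  show ?thesis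
  proof (rule real_cond_exp_charact)
    fix A assume A: "A \<in> sets F"
    then have A_M: "A \<in> sets M" using sub by (auto simp: subalgebra_def)
    have "indep_var borel (indicator A) borel (\<lambda>\<omega>. g (X \<omega>))"
      unfolding indep_var_eq
    proof (intro conjI indep_set_mono[OF ind])
      show "random_variable borel (indicator A :: 'a \<Rightarrow> real)" using A_M by simp
      show "random_variable borel (\<lambda>\<omega>. g (X \<omega>))" using X g by measurable
      show "sigma_sets (space M) {indicator A -` B \<inter> space M |B. B \<in> sets borel} \<subseteq> sets F"
        using sigma_sets_vimage_subset[of "indicator A" F borel] A by (simp add: space_F)
      have gX: "(\<lambda>\<omega>. g (X \<omega>)) \<in> measurable (vimage_algebra (space M) X borel) borel"
        by (intro measurable_compose[OF measurable_vimage_algebra1 g]) (use X in measurable)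
      show "sigma_sets (space M) {(\<lambda>\<omega>. g (X \<omega>)) -` B \<inter> space M |B. B \<in> sets borel}
          \<subseteq> sets (vimage_algebra (space M) X borel)"
        using sigma_sets_vimage_subset[OF gX] by simp
    qed
    then have "(\<integral>\<omega>. indicator A \<omega> * g (X \<omega>) \<partial>M) = (\<integral>\<omega>. indicator A \<omega> \<partial>M) * (\<integral>\<omega>. g (X \<omega>) \<partial>M)"
      using A_M int by (intro indep_var_lebesgue_integral) (auto simp: emeasure_eq_measure)
    then show "(\<integral>\<omega>\<in>A. g (X \<omega>) \<partial>M) = (\<integral>\<omega>\<in>A. integral\<^sup>L M (\<lambda>\<omega>. g (X \<omega>)) \<partial>M)"
      using A_M by (simp add: set_lebesgue_integral_def)
  qed (use int in auto)
qed


lemma integrable_bounded_mult: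
  fixes f :: "'a \<Rightarrow> real"
  assumes f: "integrable M f" and Y: "Y \<in> borel_measurable M"
    and bound: "\<And>\<omega>. \<omega> \<in> space M \<Longrightarrow> \<bar>Y \<omega>\<bar> \<le> B"
  shows "integrable M (\<lambda>\<omega>. Y \<omega> * f \<omega>)"
proof (rule Bochner_Integration.integrable_bound[OF integrable_mult_right[OF f, of B]])
  show "AE \<omega> in M. norm (Y \<omega> * f \<omega>) \<le> norm (B * f \<omega>)"
    using bound by (intro AE_I2) (force simp: abs_mult intro: mult_right_mono)
qed (use f Y in measurable)

lemma real_cond_exp_indep_mult:
  fixes X :: "'a \<Rightarrow> 'b::topological_space" and g :: "'b \<Rightarrow> real"
  assumes P: "prob_space M" and sub: "subalgebra M F"
    and ind: "prob_space.indep_set M (sets F) (sets (vimage_algebra (space M) X borel))"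
    and X: "X \<in> borel_measurable M" and g: "g \<in> borel_measurable borel"
    and int: "integrable M (\<lambda>\<omega>. g (X \<omega>))"
    and Y: "Y \<in> borel_measurable F" and Y_bound: "\<And>\<omega>. \<omega> \<in> space M \<Longrightarrow> \<bar>Y \<omega>\<bar> \<le> B"
  shows "AE \<omega> in M. real_cond_exp M F (\<lambda>\<omega>. Y \<omega> * g (X \<omega>)) \<omega>
    = Y \<omega> * integral\<^sup>L M (\<lambda>\<omega>. g (X \<omega>))"
proof -
  interpret prob_space M by fact
  interpret finite_measure_subalgebra M F by unfold_locales (rule sub)
  note [measurable] = X g measurable_from_subalg[OF sub Y]
  have "AE \<omega> in M. real_cond_exp M F (\<lambda>\<omega>. Y \<omega> * g (X \<omega>)) \<omega>
      = Y \<omega> * real_cond_exp M F (\<lambda>\<omega>. g (X \<omega>)) \<omega>"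
    using integrable_bounded_mult[OF int _ Y_bound] by (intro real_cond_exp_mult Y) measurable
  with real_cond_exp_indep[OF P sub ind X g int] show ?thesis by eventually_elim simp
qed

lemma bounded_linear_matrix_entry: "bounded_linear (\<lambda>A::real^'n^'m. A $ i $ j)"
  by (intro bounded_linear_compose[OF bounded_linear_vec_nth] bounded_linear_vec_nth)

lemma integrable_matrix_entry: "integrable M L \<Longrightarrow> integrable M (\<lambda>\<omega>. L \<omega> $ i $ j :: real)"
  by (rule integrable_bounded_linear[OF bounded_linear_matrix_entry])

lemma integral_matrix_entry:
  "integrable M L \<Longrightarrow> (\<integral>\<omega>. L \<omega> $ i $ j \<partial>M) = (integral\<^sup>L M L :: real^_^_) $ i $ j"
  by (rule integral_bounded_linear[OF bounded_linear_matrix_entry])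

lemma integrable_rayleigh:
  fixes L :: "'a \<Rightarrow> real^'n^'n" and z :: "'a \<Rightarrow> real^'m^'n"
  assumes L: "integrable M L" and z[measurable]: "z \<in> borel_measurable M"
  shows "integrable M (\<lambda>\<omega>. rayleigh (L \<omega>) (z \<omega>))"
  unfolding rayleigh_eq_sum
  by (intro Bochner_Integration.integrable_sum
      integrable_bounded_mult[OF integrable_matrix_entry[OF L], where B = 1]
      inner_components_div_norm_bound) measurable

lemma real_cond_exp_rayleigh:
  fixes L :: "'a \<Rightarrow> real^'n^'n" and z :: "'a \<Rightarrow> real^'m^'n"
  assumes P: "prob_space M" and sub: "subalgebra M F"
    and ind: "prob_space.indep_set M (sets F) (sets (vimage_algebra (space M) L borel))"
    and L: "L \<in> borel_measurable M" "integrable M L" and z[measurable]: "z \<in> borel_measurable F"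
  shows "AE \<omega> in M. real_cond_exp M F (\<lambda>\<omega>. rayleigh (L \<omega>) (z \<omega>)) \<omega> = rayleigh (integral\<^sup>L M L) (z \<omega>)"
proof -
  interpret prob_space M by fact
  interpret finite_measure_subalgebra M F by unfold_locales (rule sub)
  define Y where "Y p \<omega> = inner (z \<omega> $ fst p) (z \<omega> $ snd p) / (norm (z \<omega>))\<^sup>2" for p \<omega>
  have Y_bound: "\<bar>Y p \<omega>\<bar> \<le> 1" for p \<omega>
    unfolding Y_def by (rule inner_components_div_norm_bound)
  have Y[measurable]: "Y p \<in> borel_measurable F" for p
    unfolding Y_def by measurable
  have "AE \<omega> in M. \<forall>p\<in>UNIV. real_cond_exp M F (\<lambda>\<omega>. Y p \<omega> * L \<omega> $ fst p $ snd p) \<omega>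
      = Y p \<omega> * integral\<^sup>L M L $ fst p $ snd p"
  proof (rule AE_finite_allI)
    fix p :: "'n \<times> 'n"
    have "AE \<omega> in M. real_cond_exp M F (\<lambda>\<omega>. Y p \<omega> * L \<omega> $ fst p $ snd p) \<omega>
        = Y p \<omega> * (\<integral>\<omega>. L \<omega> $ fst p $ snd p \<partial>M)"
      by (rule real_cond_exp_indep_mult[OF P sub ind L(1) _ integrable_matrix_entry[OF L(2)] Y,
            where B = 1]) (simp_all add: Y_bound)
    then show "AE \<omega> in M. real_cond_exp M F (\<lambda>\<omega>. Y p \<omega> * L \<omega> $ fst p $ snd p) \<omega>
        = Y p \<omega> * integral\<^sup>L M L $ fst p $ snd p"
      by (simp add: integral_matrix_entry[OF L(2)])
  qed simp
  moreover have "AE \<omega> in M. real_cond_exp M F (\<lambda>\<omega>. \<Sum>p\<in>UNIV. Y p \<omega> * L \<omega> $ fst p $ snd p) \<omega>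
      = (\<Sum>p\<in>UNIV. real_cond_exp M F (\<lambda>\<omega>. Y p \<omega> * L \<omega> $ fst p $ snd p) \<omega>)"
    using measurable_from_subalg[OF sub Y] Y_bound
    by (intro real_cond_exp_sum integrable_bounded_mult[OF integrable_matrix_entry[OF L(2)]]) auto
  ultimately show ?thesis
    by eventually_elim (simp add: rayleigh_eq_sum[of _ "z _"] Y_def)
qed

lemma real_cond_exp_consensus_rate:
  fixes L :: "'a \<Rightarrow> real^'n^'n" and z :: "'a \<Rightarrow> real^'m^'n"
  assumes P: "prob_space M" and sub: "subalgebra M F"
    and ind: "prob_space.indep_set M (sets F) (sets (vimage_algebra (space M) L borel))"
    and L: "L \<in> borel_measurable M" "integrable M L" and z[measurable]: "z \<in> borel_measurable F"
  shows "AE \<omega> in M. real_cond_exp M F (\<lambda>\<omega>. consensus_rate \<beta> c (L \<omega>) (z \<omega>)) \<omega>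
    = consensus_rate \<beta> c (integral\<^sup>L M L) (z \<omega>)"
proof -
  interpret prob_space M by fact
  interpret finite_measure_subalgebra M F by unfold_locales (rule sub)
  define I where "I \<omega> = (if z \<omega> = 0 then c else 0)" for \<omega>
  define R where "R \<omega> = rayleigh (L \<omega>) (z \<omega>)" for \<omega>
  have I[measurable]: "I \<in> borel_measurable F" unfolding I_def by measurable
  have int_I: "integrable M I"
    using measurable_from_subalg[OF sub I] by (intro integrable_const_bound[where B = "\<bar>c\<bar>"]) (auto simp: I_def)
  have int_R: "integrable M R"
    unfolding R_def by (rule integrable_rayleigh[OF L(2) measurable_from_subalg[OF sub z]])
  have rate: "(\<lambda>\<omega>. consensus_rate \<beta> c (L \<omega>) (z \<omega>)) = (\<lambda>\<omega>. \<beta> / 2 * (I \<omega> + R \<omega>))"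
    by (simp add: fun_eq_iff consensus_rate_def I_def R_def)
  have "AE \<omega> in M. real_cond_exp M F (\<lambda>\<omega>. \<beta> / 2 * (I \<omega> + R \<omega>)) \<omega>
      = \<beta> / 2 * real_cond_exp M F (\<lambda>\<omega>. I \<omega> + R \<omega>) \<omega>"
    using int_I int_R by (intro real_cond_exp_cmult) simp
  moreover have "AE \<omega> in M. real_cond_exp M F (\<lambda>\<omega>. I \<omega> + R \<omega>) \<omega>
      = real_cond_exp M F I \<omega> + real_cond_exp M F R \<omega>"
    by (rule real_cond_exp_add[OF int_I int_R])
  moreover have "AE \<omega> in M. real_cond_exp M F I \<omega> = I \<omega>"
    by (rule real_cond_exp_F_meas[OF int_I I])
  moreover have "AE \<omega> in M. real_cond_exp M F R \<omega> = rayleigh (integral\<^sup>L M L) (z \<omega>)"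
    unfolding R_def by (rule real_cond_exp_rayleigh[OF P sub ind L z])
  ultimately show ?thesis
    unfolding rate by eventually_elim (simp add: consensus_rate_def I_def)
qed

lemma real_cond_exp_consensus_rate_ge:
  fixes L :: "'a \<Rightarrow> real^'n^'n" and z :: "'a \<Rightarrow> real^'m^'n"
  assumes P: "prob_space M" and sub: "subalgebra M F"
    and ind: "prob_space.indep_set M (sets F) (sets (vimage_algebra (space M) L borel))"
    and L: "L \<in> borel_measurable M" "integrable M L" and z: "z \<in> borel_measurable F"
    and mean: "integral\<^sup>L M L = A"
    and coercive: "\<And>\<omega>. \<omega> \<in> space M \<Longrightarrow> c * (norm (z \<omega>))\<^sup>2 \<le> inner (z \<omega>) (kron_apply A (z \<omega>))"
    and "0 \<le> \<beta>"
  shows "AE \<omega> in M. \<beta> * c / 2 \<le> real_cond_exp M F (\<lambda>\<omega>. consensus_rate \<beta> c (L \<omega>) (z \<omega>)) \<omega>"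
proof -
  have "AE \<omega> in M. \<beta> * c / 2 \<le> consensus_rate \<beta> c A (z \<omega>)"
    by (intro AE_I2 consensus_rate_ge coercive \<open>0 \<le> \<beta>\<close>)
  with real_cond_exp_consensus_rate[OF P sub ind L z, of \<beta> c] show ?thesis
    unfolding mean by eventually_elim simp
qed

section \<open>The rate process\<close>

lemma consensus_perp_sum_eq_0:
  assumes "z \<in> consensus_perp"
  shows "(\<Sum>i\<in>UNIV. z $ i) = 0"
proof -
  let ?a = "\<Sum>i\<in>UNIV. z $ i"
  have "(\<chi> i. ?a) \<in> consensus" by (auto simp: consensus_def)
  then have "0 = inner z (\<chi> i. ?a)" using assms unfolding consensus_perp_def by auto
  also have "\<dots> = (\<Sum>i\<in>UNIV. inner (z $ i) ?a)" by (subst inner_vec_def) simp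
  also have "\<dots> = inner ?a ?a" by (rule inner_sum_left[symmetric])
  finally show ?thesis by simp
qed

lemma integral_eq_if_distr_eq:
  fixes X Y :: "'a \<Rightarrow> 'b::{banach, second_countable_topology}"
  assumes "X \<in> borel_measurable M" "Y \<in> borel_measurable M" "distr M borel X = distr M borel Y"
  shows "integral\<^sup>L M X = integral\<^sup>L M Y"
  using integral_distr[OF assms(1), of "\<lambda>x. x"] integral_distr[OF assms(2), of "\<lambda>x. x"] assms(3)
  by simp

lemma norm_le_sum_abs_entries: "norm (A::real^'n^'m) \<le> (\<Sum>i\<in>UNIV. \<Sum>j\<in>UNIV. \<bar>A $ i $ j\<bar>)"
proof -
  have "norm A \<le> (\<Sum>i\<in>UNIV. norm (A $ i))" by (simp add: norm_vec_def L2_set_le_sum)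
  also have "\<dots> \<le> (\<Sum>i\<in>UNIV. \<Sum>j\<in>UNIV. \<bar>A $ i $ j\<bar>)" by (intro sum_mono norm_le_l1_cart)
  finally show ?thesis .
qed

lemma graph_laplacian_expectation:
  fixes L :: "'a \<Rightarrow> real^'n^'n"
  assumes "prob_space M" and L[measurable]: "L \<in> borel_measurable M"
    and lap: "\<And>\<omega>. \<omega> \<in> space M \<Longrightarrow> is_graph_laplacian (L \<omega>)"
  shows "integrable M L" "laplacian_matrix (integral\<^sup>L M L)"
proof -
  interpret prob_space M by fact
  have "norm (L \<omega>) \<le> (\<Sum>i\<in>(UNIV::'n set). \<Sum>j\<in>(UNIV::'n set). real CARD('n))"
    if "\<omega> \<in> space M" for \<omega>
    using graph_laplacian_entry_bound[OF lap[OF that]]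
    by (intro order_trans[OF norm_le_sum_abs_entries] sum_mono)
  then show int: "integrable M L"
    by (intro integrable_const_bound[where B = "\<Sum>i\<in>(UNIV::'n set). \<Sum>j\<in>(UNIV::'n set). real CARD('n)"]) auto
  have lm: "laplacian_matrix (L \<omega>)" if "\<omega> \<in> space M" for \<omega>
    by (rule graph_laplacian_laplacian_matrix[OF lap[OF that]])
  have entry: "integral\<^sup>L M L $ i $ j = (\<integral>\<omega>. L \<omega> $ i $ j \<partial>M)" for i j
    by (rule integral_matrix_entry[OF int, symmetric])
  have "(\<integral>\<omega>. L \<omega> $ i $ j \<partial>M) = (\<integral>\<omega>. L \<omega> $ j $ i \<partial>M)" for i j
    using lm by (intro Bochner_Integration.integral_cong) (auto simp: laplacian_matrix_def)
  moreover have "(\<Sum>j\<in>UNIV. \<integral>\<omega>. L \<omega> $ i $ j \<partial>M) = 0" for i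
  proof -
    have "(\<Sum>j\<in>UNIV. \<integral>\<omega>. L \<omega> $ i $ j \<partial>M) = (\<integral>\<omega>. (\<Sum>j\<in>UNIV. L \<omega> $ i $ j) \<partial>M)"
      using integrable_matrix_entry[OF int] by (simp add: Bochner_Integration.integral_sum)
    also have "\<dots> = (\<integral>\<omega>. 0 \<partial>M)"
      using lm unfolding laplacian_matrix_def by (intro Bochner_Integration.integral_cong) blast+
    finally show ?thesis by simp
  qed
  moreover have "(\<integral>\<omega>. L \<omega> $ i $ j \<partial>M) \<le> 0" if "i \<noteq> j" for i j
  proof -
    have "0 \<le> (\<integral>\<omega>. - L \<omega> $ i $ j \<partial>M)"
      using lm that by (intro integral_nonneg_AE AE_I2) (auto simp: laplacian_matrix_def)
    then show ?thesis by simp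
  qed
  ultimately show "laplacian_matrix (integral\<^sup>L M L)"
    by (simp add: laplacian_matrix_def entry)
qed

lemma eventually_step_size_le:
  fixes b \<tau> \<epsilon> :: real
  assumes "0 < \<tau>" "0 < \<epsilon>"
  obtains T where "\<And>t. T \<le> t \<Longrightarrow> b / (real t + 1) powr \<tau> \<le> \<epsilon>"
proof -
  have "filterlim (\<lambda>t. real t + 1) at_top sequentially"
    using filterlim_tendsto_add_at_top[OF tendsto_const filterlim_real_sequentially, of 1]
    by (simp add: add.commute)
  then have "(\<lambda>t. (real t + 1) powr - \<tau>) \<longlonglongrightarrow> 0"
    using assms(1) by (intro tendsto_neg_powr) simp_all
  from tendsto_mult_left_zero[OF this, of b]
  have "(\<lambda>t. b / (real t + 1) powr \<tau>) \<longlonglongrightarrow> 0"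
    by (simp add: powr_minus_divide)
  then have "eventually (\<lambda>t. b / (real t + 1) powr \<tau> < \<epsilon>) sequentially"
    using assms(2) by (rule order_tendstoD)
  then obtain N where "\<forall>t\<ge>N. b / (real t + 1) powr \<tau> < \<epsilon>"
    by (auto simp: eventually_sequentially)
  then show thesis by (intro that[of N]) (simp add: less_imp_le)
qed

theorem lemma4p4:
  fixes M :: "'a measure" and F :: "nat \<Rightarrow> 'a measure"
    and L :: "nat \<Rightarrow> 'a \<Rightarrow> real^'n^'n"
    and z :: "nat \<Rightarrow> 'a \<Rightarrow> real^'m^'n"
    and b \<tau>2 :: real
  assumes "prob_space M"
    and filt_sub: "\<And>t. subalgebra M (F t)"
    and filt_mono: "\<And>s t. s \<le> t \<Longrightarrow> subalgebra (F t) (F s)"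
    and b_pos: "b > 0" and tau_pos: "0 < \<tau>2" and tau_le: "\<tau>2 \<le> 1"
    and L_lap: "\<And>t \<omega>. \<omega> \<in> space M \<Longrightarrow> is_graph_laplacian (L t \<omega>)"
    and L_meas: "\<And>t. L t \<in> borel_measurable (F (Suc t))"
    and L_indep_past: "\<And>t. prob_space.indep_set M (sets (F t))
                               (sets (vimage_algebra (space M) (L t) borel))"
    and L_indep: "prob_space.indep_vars M (\<lambda>_. borel) L UNIV"
    and L_ident: "\<And>t. distr M borel (L t) = distr M borel (L 0)"
    and lambda2_pos: "\<And>t. lambda2 (integral\<^sup>L M (L t)) > 0"
    and z_adapted: "\<And>t. z t \<in> borel_measurable (F t)"
    and z_perp: "\<And>t \<omega>. \<omega> \<in> space M \<Longrightarrow> z t \<omega> \<in> consensus_perp"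
  shows "\<exists>(r :: nat \<Rightarrow> 'a \<Rightarrow> real) (c_r :: real).
           c_r > 0 \<and>
           (\<forall>t. r t \<in> borel_measurable (F (Suc t))) \<and>
           (\<forall>t. \<forall>\<omega>\<in>space M. r t \<omega> \<ge> 0) \<and>
           (\<forall>t. AE \<omega> in M. r t \<omega> \<le> 1) \<and>
           (\<exists>T. \<forall>t\<ge>T.
              (\<forall>\<omega>\<in>space M.
                 norm (z t \<omega> - (b / (real t + 1) powr \<tau>2) *\<^sub>R kron_apply (L t \<omega>) (z t \<omega>))
                   \<le> (1 - r t \<omega>) * norm (z t \<omega>)) \<and>
              (AE \<omega> in M. real_cond_exp M (F t) (r t) \<omega> \<ge> c_r / (real t + 1) powr \<tau>2))"
proof -
  have L_M[measurable]: "L t \<in> borel_measurable M" for t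
    by (rule measurable_from_subalg[OF filt_sub L_meas])
  note mean = graph_laplacian_expectation[OF \<open>prob_space M\<close> L_M L_lap]
  define Lbar where "Lbar = integral\<^sup>L M (L 0)"
  have E_L: "integral\<^sup>L M (L t) = Lbar" for t
    unfolding Lbar_def by (rule integral_eq_if_distr_eq[OF L_M L_M L_ident])
  obtain c0 where "c0 > 0" and c0: "\<And>w::real^'m^'n. (\<Sum>i\<in>UNIV. w $ i) = 0 \<Longrightarrow>
      c0 * (norm w)\<^sup>2 \<le> inner w (kron_apply Lbar w)"
    using laplacian_form_coercive[OF mean(2) lambda2_pos, of 0] unfolding Lbar_def by blast
  define c where "c = min c0 1"
  have c: "0 < c" "c \<le> 1" using \<open>c0 > 0\<close> by (auto simp: c_def)
  have coercive: "c * (norm (z t \<omega>))\<^sup>2 \<le> inner (z t \<omega>) (kron_apply Lbar (z t \<omega>))"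
    if "\<omega> \<in> space M" for t \<omega>
  proof -
    have "c * (norm (z t \<omega>))\<^sup>2 \<le> c0 * (norm (z t \<omega>))\<^sup>2"
      by (intro mult_right_mono) (simp_all add: c_def)
    also have "\<dots> \<le> inner (z t \<omega>) (kron_apply Lbar (z t \<omega>))"
      by (rule c0[OF consensus_perp_sum_eq_0[OF z_perp[OF that]]])
    finally show ?thesis .
  qed
  define \<beta> where "\<beta> t = b / (real t + 1) powr \<tau>2" for t :: nat
  have \<beta>_nonneg: "0 \<le> \<beta> t" for t using b_pos by (simp add: \<beta>_def)
  obtain T where T: "\<And>t. T \<le> t \<Longrightarrow> 2 * real CARD('n) * \<beta> t \<le> 1"
    using eventually_step_size_le[OF tau_pos, of "1 / (2 * CARD('n))" b]
    by (auto simp: \<beta>_def pos_le_divide_eq mult.commute)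
  define r where "r t \<omega> = (if t < T then 0 else consensus_rate (\<beta> t) c (L t \<omega>) (z t \<omega>))" for t \<omega>
  have r_late: "r t = (\<lambda>\<omega>. consensus_rate (\<beta> t) c (L t \<omega>) (z t \<omega>))" if "T \<le> t" for t
    using that by (simp add: r_def fun_eq_iff)
  have contraction:
      "norm (z t \<omega> - \<beta> t *\<^sub>R kron_apply (L t \<omega>) (z t \<omega>)) \<le> (1 - r t \<omega>) * norm (z t \<omega>)"
      "0 \<le> r t \<omega>" "r t \<omega> \<le> 1" if "\<omega> \<in> space M" "T \<le> t" for t \<omega>
    using consensus_rate_contraction[OF L_lap[OF that(1)] \<beta>_nonneg T[OF that(2)] less_imp_le c(2)] c(1)
    by (simp_all add: r_late[OF that(2)])
  have "r t \<in> borel_measurable (F (Suc t))" for t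
    using measurable_from_subalg[OF filt_mono z_adapted, of t "Suc t"] L_meas[of t]
    by (cases "t < T") (simp_all add: r_def[abs_def] borel_measurable_consensus_rate)
  moreover have "0 \<le> r t \<omega>" "r t \<omega> \<le> 1" if "\<omega> \<in> space M" for t \<omega>
    using contraction[OF that] by (simp_all add: r_def not_less)
  moreover have "AE \<omega> in M. b * c / 2 / (real t + 1) powr \<tau>2 \<le> real_cond_exp M (F t) (r t) \<omega>"
    if "T \<le> t" for t
  proof -
    have "b * c / 2 / (real t + 1) powr \<tau>2 = \<beta> t * c / 2" by (simp add: \<beta>_def)
    then show ?thesis
      unfolding r_late[OF that]
      by (simp only:) (rule real_cond_exp_consensus_rate_ge[OF \<open>prob_space M\<close> filt_sub L_indep_past L_M
            mean(1) z_adapted E_L coercive \<beta>_nonneg])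
  qed
  ultimately show ?thesis
    using b_pos c(1) contraction(1) unfolding \<beta>_def
    by (intro exI[of _ r] exI[of _ "b * c / 2"] conjI exI[of _ T] allI impI ballI) (auto intro: AE_I2)
qed

end
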